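(* Let $k\ge1$ and $n\ge 2k+1$. If the Kneser graph $K(n,k)$ admits a Hamilton cycle, then the bipartite Kneser graph $H(n,k)$ admits a Hamilton cycle or a Hamilton path.
   Context: $K(n,k)$ has as vertices all $k$-element subsets of $[n]$, two sets adjacent iff disjoint. The bipartite Kneser graph $H(n,k)$ has as vertices all $k$-element and all $(n-k)$-element subsets of $[n]$, with an edge between $A$ and $B$ if and only if $A\subseteq B$. *)

theory Defs
  imports Main
begin

definition hamilton_cycle :: "'a set \<Rightarrow> ('a \<Rightarrow> 'a \<Rightarrow> bool) \<Rightarrow> 'a list \<Rightarrow> bool" where
  "hamilton_cycle V E xs \<longleftrightarrow>
     distinct xs \<and> set xs = V \<and> length xs \<ge> 3 \<and>
     (\<forall>i. Suc i < length xs \<longrightarrow> E (xs ! i) (xs ! Suc i)) \<and>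
     E (last xs) (hd xs)"

definition hamilton_path :: "'a set \<Rightarrow> ('a \<Rightarrow> 'a \<Rightarrow> bool) \<Rightarrow> 'a list \<Rightarrow> bool" where
  "hamilton_path V E xs \<longleftrightarrow>
     distinct xs \<and> set xs = V \<and> xs \<noteq> [] \<and>
     (\<forall>i. Suc i < length xs \<longrightarrow> E (xs ! i) (xs ! Suc i))"

definition has_hamilton_cycle :: "'a set \<Rightarrow> ('a \<Rightarrow> 'a \<Rightarrow> bool) \<Rightarrow> bool" where
  "has_hamilton_cycle V E \<longleftrightarrow> (\<exists>xs. hamilton_cycle V E xs)"

definition has_hamilton_path :: "'a set \<Rightarrow> ('a \<Rightarrow> 'a \<Rightarrow> bool) \<Rightarrow> bool" where
  "has_hamilton_path V E \<longleftrightarrow> (\<exists>xs. hamilton_path V E xs)"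

definition kneser_vertices :: "nat \<Rightarrow> nat \<Rightarrow> nat set set" where
  "kneser_vertices n k = {A. A \<subseteq> {1..n} \<and> card A = k}"

definition kneser_adj :: "nat set \<Rightarrow> nat set \<Rightarrow> bool" where
  "kneser_adj A B \<longleftrightarrow> A \<inter> B = {}"

definition bip_kneser_vertices :: "nat \<Rightarrow> nat \<Rightarrow> nat set set" where
  "bip_kneser_vertices n k =
     {A. A \<subseteq> {1..n} \<and> card A = k} \<union> {B. B \<subseteq> {1..n} \<and> card B = n - k}"

definition bip_kneser_adj :: "nat \<Rightarrow> nat \<Rightarrow> nat set \<Rightarrow> nat set \<Rightarrow> bool" where
  "bip_kneser_adj n k A B \<longleftrightarrow>
     (card A = k \<and> card B = n - k \<and> A \<subseteq> B) \<or> (card B = k \<and> card A = n - k \<and> B \<subseteq> A)"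

end

theory Submission
  imports Defs "HOL-Number_Theory.Cong"
begin

text \<open>
  H(n,k) is the bipartite double cover of K(n,k): the copy of A in one layer is A itself, in the
  other layer its complement, and complementing one end turns disjointness into inclusion.
  A Hamilton cycle A_0, ..., A_(N-1) of K(n,k) is traversed twice, switching layer at every step.
  For odd N this closes up only after both rounds and is a Hamilton cycle of the cover. For even N
  it splits into two cycles, one per colour class of the positions; as K(n,k) is not
  two-colourable, some edge A_i A_j joins two positions of equal parity, and it links the two
  cycles into a Hamilton path.
\<close>

definition double_cover :: "('a \<Rightarrow> 'a \<Rightarrow> bool) \<Rightarrow> 'a \<times> bool \<Rightarrow> 'a \<times> bool \<Rightarrow> bool" where
  "double_cover E = (\<lambda>(u, p) (v, q). E u v \<and> p \<noteq> q)"

definition two_colourable :: "'a set \<Rightarrow> ('a \<Rightarrow> 'a \<Rightarrow> bool) \<Rightarrow> bool" where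
  "two_colourable V E \<longleftrightarrow> (\<exists>P :: 'a \<Rightarrow> bool. \<forall>u\<in>V. \<forall>v\<in>V. E u v \<longrightarrow> P u \<noteq> P v)"

lemma has_hamilton_cycle_transfer:
  assumes "has_hamilton_cycle V E" "bij_betw f V W"
    and "\<And>u v. u \<in> V \<Longrightarrow> v \<in> V \<Longrightarrow> E u v \<Longrightarrow> F (f u) (f v)"
  shows "has_hamilton_cycle W F"
proof -
  obtain xs where xs: "hamilton_cycle V E xs"
    using assms(1) unfolding has_hamilton_cycle_def by blast
  then have "xs \<noteq> []" "set xs = V"
    unfolding hamilton_cycle_def by auto
  then have "hamilton_cycle W F (map f xs)"
    using xs assms(2,3) unfolding hamilton_cycle_def bij_betw_def
    by (auto simp: distinct_map last_map hd_map)
  then show ?thesis unfolding has_hamilton_cycle_def by blast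
qed

lemma has_hamilton_path_transfer:
  assumes "has_hamilton_path V E" "bij_betw f V W"
    and "\<And>u v. u \<in> V \<Longrightarrow> v \<in> V \<Longrightarrow> E u v \<Longrightarrow> F (f u) (f v)"
  shows "has_hamilton_path W F"
proof -
  obtain xs where xs: "hamilton_path V E xs"
    using assms(1) unfolding has_hamilton_path_def by blast
  then have "hamilton_path W F (map f xs)"
    using assms(2,3) unfolding hamilton_path_def bij_betw_def
    by (auto simp: distinct_map)
  then show ?thesis unfolding has_hamilton_path_def by blast
qed

lemma successively_map_upt:
  "(\<And>m. R (f m) (f (Suc m))) \<Longrightarrow> successively R (map f [a..<b])"
  unfolding successively_conv_nth by simp

lemma set_eq_if_distinct_length_card:
  assumes "distinct ys" "set ys \<subseteq> W" "finite W" "length ys = card W"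
  shows "set ys = W"
  using assms by (metis card_subset_eq distinct_card)

lemma card_double_cover_vertices:
  "finite V \<Longrightarrow> card (V \<times> (UNIV :: bool set)) = 2 * card V"
  by (simp add: card_cartesian_product)

lemma inj_on_mod_interval: "inj_on (\<lambda>r. r mod N) {a..<a + (N::nat)}"
proof (rule inj_onI)
  fix r s assume "r \<in> {a..<a + N}" "s \<in> {a..<a + N}" "r mod N = s mod N"
  then obtain m m' where "r = a + m" "s = a + m'" "m < N" "m' < N" "(a + m) mod N = (a + m') mod N"
    by (metis add.commute atLeastLessThan_iff le_iff_add nat_add_left_cancel_less)
  then show "r = s"
    by (metis cong_add_lcancel_nat cong_def cong_less_modulus_unique_nat)
qed

lemma inj_on_mod_parity_double:
  assumes "odd N"
  shows "inj_on (\<lambda>m. (m mod N, even m)) {..<2 * (N::nat)}"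
proof (rule inj_onI)
  fix m m' assume m: "m \<in> {..<2 * N}" "m' \<in> {..<2 * N}"
    and eq: "(m mod N, even m) = (m' mod N, even m')"
  have reduce: "x mod N = (if x < N then x else x - N)" if "x < 2 * N" for x
    using that by (simp add: mod_if)
  show "m = m'"
    using eq m reduce[of m] reduce[of m'] assms
    by (auto split: if_splits) (metis add_diff_inverse_nat even_add)+
qed

context
  fixes V :: "'a set" and E xs N
  assumes cycle: "hamilton_cycle V E xs"
  defines "N \<equiv> length xs"
begin

private lemma N_ge_3: "N \<ge> 3"
  using cycle unfolding hamilton_cycle_def N_def by auto

private lemma N_pos: "N > 0"
  using N_ge_3 by simp

lemma hamilton_cycle_step_mod: "E (xs ! (m mod N)) (xs ! (Suc m mod N))"
proof (cases "Suc (m mod N) = N")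
  case True
  then have "m mod N = N - 1" by simp
  then have "xs ! (m mod N) = last xs" "xs ! (Suc m mod N) = hd xs"
    using N_pos unfolding N_def by (auto simp: last_conv_nth hd_conv_nth mod_Suc)
  then show ?thesis using cycle unfolding hamilton_cycle_def by simp
next
  case False
  then have "Suc (m mod N) < N"
    using N_pos by (metis Suc_lessI mod_less_divisor)
  then show ?thesis
    using cycle False unfolding hamilton_cycle_def N_def by (simp add: mod_Suc)
qed

private lemma nth_mod_in: "xs ! (m mod N) \<in> V"
  using cycle N_pos unfolding hamilton_cycle_def N_def by (metis mod_less_divisor nth_mem)

private lemma card_V: "finite V" "card V = N"
  using cycle unfolding hamilton_cycle_def N_def by (auto simp: distinct_card)

definition cover_walk :: "bool \<Rightarrow> nat \<Rightarrow> 'a \<times> bool" where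
  "cover_walk b m = (xs ! (m mod N), even m = b)"

private lemma cover_walk_in: "cover_walk b m \<in> V \<times> UNIV"
  unfolding cover_walk_def using nth_mod_in by simp

private lemma cover_walk_step: "double_cover E (cover_walk b m) (cover_walk b (Suc m))"
  unfolding cover_walk_def double_cover_def using hamilton_cycle_step_mod by simp

private lemma cover_walk_eq_iff:
  "cover_walk b m = cover_walk b' m' \<longleftrightarrow> m mod N = m' mod N \<and> (even m = b) = (even m' = b')"
  using cycle N_pos unfolding cover_walk_def hamilton_cycle_def N_def
  by (auto simp: nth_eq_iff_index_eq)

lemma double_cover_hamilton_cycle_if_odd:
  assumes "odd N"
  shows "has_hamilton_cycle (V \<times> UNIV) (double_cover E)"
proof -
  define ys where "ys = map (cover_walk True) [0..<2 * N]"
  have "distinct ys"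
    unfolding ys_def distinct_map
    using inj_on_mod_parity_double[OF assms] by (auto simp: cover_walk_eq_iff inj_on_def)
  moreover have "set ys \<subseteq> V \<times> UNIV"
    unfolding ys_def using cover_walk_in by (simp add: image_subset_iff)
  moreover have "length ys = card (V \<times> (UNIV :: bool set))"
    using card_V card_double_cover_vertices by (simp add: ys_def)
  ultimately have "set ys = V \<times> UNIV"
    using card_V by (intro set_eq_if_distinct_length_card) auto
  moreover have "double_cover E (ys ! i) (ys ! Suc i)" if "Suc i < length ys" for i
    using that cover_walk_step by (simp add: ys_def)
  moreover have "double_cover E (last ys) (hd ys)"
  proof -
    have "last ys = cover_walk True (2 * N - 1)" "hd ys = cover_walk True 0"
      using N_pos by (auto simp: ys_def last_map hd_map)
    moreover have "cover_walk True (Suc (2 * N - 1)) = cover_walk True 0"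
      using N_pos by (simp add: cover_walk_def)
    ultimately show ?thesis using cover_walk_step by metis
  qed
  ultimately have "hamilton_cycle (V \<times> UNIV) (double_cover E) ys"
    using \<open>distinct ys\<close> N_ge_3 unfolding hamilton_cycle_def by (simp add: ys_def)
  then show ?thesis unfolding has_hamilton_cycle_def by blast
qed

lemma hamilton_cycle_chord_equal_parity:
  assumes "\<not> two_colourable V E"
  obtains i j where "i < N" "j < N" "even i = even j" "E (xs ! i) (xs ! j)"
proof -
  define P where "P u \<longleftrightarrow> (\<exists>i<N. xs ! i = u \<and> even i)" for u
  obtain u v where "u \<in> V" "v \<in> V" "E u v" "P u = P v"
    using assms unfolding two_colourable_def by blast
  moreover have "\<exists>i<N. xs ! i = u" "\<exists>j<N. xs ! j = v"
    using \<open>u \<in> V\<close> \<open>v \<in> V\<close> cycle unfolding hamilton_cycle_def N_def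
    by (auto simp: in_set_conv_nth)
  moreover have "P (xs ! i) \<longleftrightarrow> even i" if "i < N" for i
    using cycle that unfolding P_def hamilton_cycle_def N_def by (auto simp: nth_eq_iff_index_eq)
  ultimately show ?thesis using that by metis
qed

lemma double_cover_hamilton_path_if_even:
  assumes "even N" "\<not> two_colourable V E"
  shows "has_hamilton_path (V \<times> UNIV) (double_cover E)"
proof -
  obtain i j where ij: "i < N" "j < N" "even i = even j" "E (xs ! i) (xs ! j)"
    using hamilton_cycle_chord_equal_parity[OF assms(2)] by blast
  define first where "first = map (cover_walk True) [Suc i..<Suc i + N]"
  define second where "second = map (cover_walk False) [j..<j + N]"
  have parity_mod: "even (m mod N) = even m" for m
    using assms(1) by (metis div_mult_mod_eq even_add even_mult_iff)
  have inj: "inj_on (cover_walk b) {a..<a + N}" for b a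
    using inj_on_mod_interval[of N a] by (auto simp: inj_on_def cover_walk_eq_iff)
  have apart: "cover_walk True m \<noteq> cover_walk False m'" for m m'
    using parity_mod[of m] parity_mod[of m'] by (auto simp: cover_walk_eq_iff)
  have "distinct (first @ second)"
    unfolding first_def second_def distinct_append distinct_map set_map set_upt
    using inj[of True "Suc i"] inj[of False j] by auto (metis apart)
  moreover have "set (first @ second) \<subseteq> V \<times> UNIV"
    using cover_walk_in by (simp add: first_def second_def image_subset_iff)
  moreover have "length (first @ second) = card (V \<times> (UNIV :: bool set))"
    using card_V card_double_cover_vertices by (simp add: first_def second_def)
  ultimately have "set (first @ second) = V \<times> UNIV"
    using card_V by (intro set_eq_if_distinct_length_card) auto
  moreover have "successively (double_cover E) (first @ second)"
  proof -
    have "last first = cover_walk True (i + N)" "hd second = cover_walk False j"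
      using N_pos by (auto simp: first_def second_def last_map hd_map)
    then have "double_cover E (last first) (hd second)"
      using ij assms(1) by (simp add: cover_walk_def double_cover_def)
    moreover have "successively (double_cover E) first" "successively (double_cover E) second"
      unfolding first_def second_def by (intro successively_map_upt cover_walk_step)+
    ultimately show ?thesis
      by (simp add: successively_append_iff)
  qed
  ultimately have "hamilton_path (V \<times> UNIV) (double_cover E) (first @ second)"
    using \<open>distinct (first @ second)\<close> N_pos
    unfolding hamilton_path_def successively_conv_nth by (simp add: first_def)
  then show ?thesis unfolding has_hamilton_path_def by blast
qed

end

definition kneser_cover_map :: "nat \<Rightarrow> nat set \<times> bool \<Rightarrow> nat set" where
  "kneser_cover_map n = (\<lambda>(X, p). if p then X else {1..n} - X)"

lemma card_interval_diff: "X \<subseteq> {1..n} \<Longrightarrow> card ({1..n} - X) = n - card X"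
  by (simp add: card_Diff_subset finite_subset)

lemma bij_betw_kneser_cover_map:
  assumes "2 * k < n"
  shows "bij_betw (kneser_cover_map n) (kneser_vertices n k \<times> UNIV) (bip_kneser_vertices n k)"
  unfolding bij_betw_def
proof
  show "inj_on (kneser_cover_map n) (kneser_vertices n k \<times> UNIV)"
  proof (rule inj_onI, clarify)
    fix X p Y q
    assume X: "X \<in> kneser_vertices n k" and Y: "Y \<in> kneser_vertices n k"
      and eq: "kneser_cover_map n (X, p) = kneser_cover_map n (Y, q)"
    have "card ({1..n} - Z) \<noteq> k" "{1..n} - ({1..n} - Z) = Z" if "Z \<in> kneser_vertices n k" for Z
      using that assms card_interval_diff[of Z n] unfolding kneser_vertices_def by auto
    then show "X = Y \<and> p = q"
      using X Y eq unfolding kneser_cover_map_def kneser_vertices_def by (auto split: if_splits)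
  qed
  show "kneser_cover_map n ` (kneser_vertices n k \<times> UNIV) = bip_kneser_vertices n k"
  proof (rule set_eqI, rule iffI)
    fix B assume "B \<in> kneser_cover_map n ` (kneser_vertices n k \<times> UNIV)"
    then obtain X p where "B = kneser_cover_map n (X, p)" "X \<subseteq> {1..n}" "card X = k"
      unfolding kneser_vertices_def by auto
    then show "B \<in> bip_kneser_vertices n k"
      using card_interval_diff[of X n]
      unfolding kneser_cover_map_def bip_kneser_vertices_def by auto
  next
    fix B assume B: "B \<in> bip_kneser_vertices n k"
    show "B \<in> kneser_cover_map n ` (kneser_vertices n k \<times> UNIV)"
    proof (cases "card B = k")
      case True
      then have "B = kneser_cover_map n (B, True)" "B \<in> kneser_vertices n k"
        using B unfolding kneser_cover_map_def kneser_vertices_def bip_kneser_vertices_def by auto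
      then show ?thesis by blast
    next
      case False
      then have "B = kneser_cover_map n ({1..n} - B, False)" "{1..n} - B \<in> kneser_vertices n k"
        using B assms card_interval_diff[of B n]
        unfolding kneser_cover_map_def kneser_vertices_def bip_kneser_vertices_def by auto
      then show ?thesis by blast
    qed
  qed
qed

lemma bip_kneser_adj_kneser_cover_map:
  assumes "X \<in> kneser_vertices n k" "Y \<in> kneser_vertices n k"
    and "double_cover kneser_adj (X, p) (Y, q)"
  shows "bip_kneser_adj n k (kneser_cover_map n (X, p)) (kneser_cover_map n (Y, q))"
  using assms card_interval_diff[of X n] card_interval_diff[of Y n]
  unfolding kneser_vertices_def double_cover_def kneser_adj_def kneser_cover_map_def bip_kneser_adj_def
  by auto

text \<open>Two consecutive windows {t+1..t+k} and {t+2..t+k+1} have a common disjoint neighbour,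
  so they get the same colour; yet the windows {1..k} and {k+1..2k} are adjacent.\<close>

lemma kneser_not_two_colourable:
  assumes "k \<ge> 1" "n \<ge> 2 * k + 1"
  shows "\<not> two_colourable (kneser_vertices n k) kneser_adj"
proof
  assume "two_colourable (kneser_vertices n k) kneser_adj"
  then obtain P :: "nat set \<Rightarrow> bool" where colouring:
      "\<forall>X\<in>kneser_vertices n k. \<forall>Y\<in>kneser_vertices n k. X \<inter> Y = {} \<longrightarrow> P X \<noteq> P Y"
    unfolding two_colourable_def kneser_adj_def by blast
  note P = colouring[rule_format]
  have window: "{t+1..t+k} \<in> kneser_vertices n k" if "t \<le> k" for t
    using that assms unfolding kneser_vertices_def by auto
  have step: "P {t+1..t+k} = P {Suc t+1..Suc t+k}" if "t < k" for t
  proof -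
    have "card ({1..n} - {t+1..t+k+1}) \<ge> k"
      using that assms card_interval_diff[of "{t+1..t+k+1}" n] by simp
    then obtain R where R: "R \<subseteq> {1..n} - {t+1..t+k+1}" "card R = k"
      by (meson obtain_subset_with_card_n)
    then have R_vertex: "R \<in> kneser_vertices n k"
      unfolding kneser_vertices_def by auto
    have "P {t+1..t+k} \<noteq> P R" "P {Suc t+1..Suc t+k} \<noteq> P R"
      using R(1) that by (intro P window R_vertex; auto)+
    then show ?thesis by simp
  qed
  have "P {t+1..t+k} = P {1..k}" if "t \<le> k" for t
    using that
  proof (induction t)
    case (Suc t)
    then show ?case using step[of t] by simp
  qed simp
  moreover have "P {k+1..k+k} \<noteq> P {1..k}"
    using window[of 0] by (intro P window) auto
  ultimately show False by blast
qed

theorem mainTheorem4: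
  fixes n k :: nat
  assumes "k \<ge> 1" and "n \<ge> 2 * k + 1"
    and "has_hamilton_cycle (kneser_vertices n k) kneser_adj"
  shows "has_hamilton_cycle (bip_kneser_vertices n k) (bip_kneser_adj n k)
       \<or> has_hamilton_path (bip_kneser_vertices n k) (bip_kneser_adj n k)"
proof -
  let ?K = "kneser_vertices n k"
  obtain xs where xs: "hamilton_cycle ?K kneser_adj xs"
    using assms(3) unfolding has_hamilton_cycle_def by blast
  have bij: "bij_betw (kneser_cover_map n) (?K \<times> UNIV) (bip_kneser_vertices n k)"
    using assms(2) by (simp add: bij_betw_kneser_cover_map)
  have hom: "bip_kneser_adj n k (kneser_cover_map n u) (kneser_cover_map n v)"
    if "u \<in> ?K \<times> UNIV" "v \<in> ?K \<times> UNIV" "double_cover kneser_adj u v" for u v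
    using that bip_kneser_adj_kneser_cover_map by auto
  show ?thesis
  proof (cases "even (length xs)")
    case True
    then have "has_hamilton_path (?K \<times> UNIV) (double_cover kneser_adj)"
      using double_cover_hamilton_path_if_even[OF xs] kneser_not_two_colourable[OF assms(1,2)]
      by blast
    from has_hamilton_path_transfer[where F = "bip_kneser_adj n k", OF this bij hom]
    show ?thesis by blast
  next
    case False
    then have "has_hamilton_cycle (?K \<times> UNIV) (double_cover kneser_adj)"
      using double_cover_hamilton_cycle_if_odd[OF xs] by blast
    from has_hamilton_cycle_transfer[where F = "bip_kneser_adj n k", OF this bij hom]
    show ?thesis by blast
  qed
qed

end
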